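(* Let $\mathcal D$ consist of $n$ i.i.d. triples $(x,a,y)$ with $x\sim d_0$, $a$ uniform on $\mathcal A$, and $y$ the environment's feedback. Let $\iota\ge\log\frac{2|\Pi||\Psi|}{\delta}$ and $\varepsilon_{\mathcal D}=\sqrt{\iota/(2n)}$. Then with probability at least $1-\delta$, for every $\pi\in\Pi$ with $V(\pi)\le V(\pi_u)$ and every $\psi\in\Psi$, $$\widehat V_{\mathcal D}(\pi,\psi)-\widehat V_{\mathcal D}(\pi_u,\psi)\le V(\pi_u)+K\varepsilon_{\mathcal D},$$ where $\widehat V_{\mathcal D}(\pi,\psi)=\frac1n\sum_{(x,a,y)\in\mathcal D}K\psi(y)\pi(a|x)$ and $\widehat V_{\mathcal D}(\pi_u,\psi)=\frac1n\sum_{(x,a,y)\in\mathcal D}\psi(y)$. (Assumption 1 is assumed.)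
   Context: IGL setting: contexts $x\sim d_0$, finite action set $\mathcal A$ with $|\mathcal A|=K$, latent reward $r\in\{0,1\}$ and feedback $y\in\mathcal Y$ drawn given $(x,a)$; $R(x,a)=\mathbb E[r|x,a]$, $V(\pi)=\mathbb E_{x\sim d_0,a\sim\pi(\cdot|x)}[R(x,a)]$, $V(\pi,\psi)=\mathbb E_{x\sim d_0,a\sim\pi(\cdot|x)}[\psi(y)]$ for decoders $\psi:\mathcal Y\to[0,1]$. $\Pi$, $\Psi$ finite classes of policies and decoders. Assumption 1: there are distributions $Q_0,Q_1$ on $\mathcal Y$ with $y\mid(x,a,r)\sim Q_r$. $\pi_u$ is the uniform policy $\pi_u(a|x)=1/K$. *)

theory Defs
  imports "HOL-Probability.Probability"
begin

text \<open>Contexts of type 'x with distribution d0 (a probability measure),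
  finite action type 'a (K = CARD('a)), latent binary reward r with
  P(r = 1 | x, a) = R x a, feedback of type 'y with y | (x,a,r) ~ Q_r
  (Assumption 1). A policy is pi :: 'x => 'a => real, pi x a = pi(a|x).\<close>

definition sample_dist ::
  "'x measure \<Rightarrow> ('x \<Rightarrow> 'a::finite \<Rightarrow> real) \<Rightarrow> 'y measure \<Rightarrow> 'y measure
     \<Rightarrow> ('x \<times> 'a \<times> 'y) measure" where
  "sample_dist d0 R Q0 Q1 =
     d0 \<bind> (\<lambda>x. measure_pmf (pmf_of_set (UNIV :: 'a set)) \<bind> (\<lambda>a.
       measure_pmf (bernoulli_pmf (R x a)) \<bind> (\<lambda>r.
         distr (if r then Q1 else Q0) (d0 \<Otimes>\<^sub>M count_space UNIV \<Otimes>\<^sub>M Q0)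
               (\<lambda>y. (x, a, y)))))"

definition data_dist ::
  "nat \<Rightarrow> 'x measure \<Rightarrow> ('x \<Rightarrow> 'a::finite \<Rightarrow> real) \<Rightarrow> 'y measure \<Rightarrow> 'y measure
     \<Rightarrow> (nat \<Rightarrow> 'x \<times> 'a \<times> 'y) measure" where
  "data_dist n d0 R Q0 Q1 = PiM {..<n} (\<lambda>_. sample_dist d0 R Q0 Q1)"

definition Vpol :: "'x measure \<Rightarrow> ('x \<Rightarrow> 'a::finite \<Rightarrow> real) \<Rightarrow> ('x \<Rightarrow> 'a \<Rightarrow> real) \<Rightarrow> real" where
  "Vpol d0 R \<pi> = (\<integral>x. (\<Sum>a\<in>UNIV. \<pi> x a * R x a) \<partial>d0)"

definition unif_pol :: "'x \<Rightarrow> 'a::finite \<Rightarrow> real" where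
  "unif_pol x a = 1 / real CARD('a)"

definition Vhat :: "nat \<Rightarrow> (nat \<Rightarrow> 'x \<times> 'a::finite \<times> 'y) \<Rightarrow> ('x \<Rightarrow> 'a \<Rightarrow> real) \<Rightarrow> ('y \<Rightarrow> real) \<Rightarrow> real" where
  "Vhat n D \<pi> \<psi> = (1 / real n) * (\<Sum>i<n. (case D i of (x, a, y) \<Rightarrow> real CARD('a) * \<psi> y * \<pi> x a))"

definition Vhat_u :: "nat \<Rightarrow> (nat \<Rightarrow> 'x \<times> 'a \<times> 'y) \<Rightarrow> ('y \<Rightarrow> real) \<Rightarrow> real" where
  "Vhat_u n D \<psi> = (1 / real n) * (\<Sum>i<n. (case D i of (x, a, y) \<Rightarrow> \<psi> y))"

end

theory Submission
  imports Defs
begin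

(* Each summand Z = (K pi(a|x) - 1) psi(y) of the difference of the two estimates lies in
   [-1, K - 1]. Conditioning on x and then on the latent reward, Assumption 1 gives
   E Z = (E_Q1 psi - E_Q0 psi) (V(pi) - V(pi_u)); since E_Q1 psi - E_Q0 psi >= -1 this is at most
   V(pi_u) - V(pi) <= V(pi_u) whenever V(pi) <= V(pi_u). Hoeffding's inequality for the n i.i.d.
   summands bounds the probability of exceeding the mean by K eps_D by
   exp (-2 n (K eps_D)^2 / K^2) = exp (-iota), and a union bound over Pi x Psi leaves failure
   probability |Pi| |Psi| exp (-iota) <= delta / 2. *)

lemma indep_vars_PiM_components:
  assumes I: "I \<noteq> {}" and N: "prob_space N"
  shows "prob_space.indep_vars (PiM I (\<lambda>_. N)) (\<lambda>_. N) (\<lambda>i \<omega>. \<omega> i) I"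
proof -
  interpret prob_space "PiM I (\<lambda>_. N)" by (intro prob_space_PiM) (use N in auto)
  have "distr (PiM I (\<lambda>_. N)) (PiM I (\<lambda>_. N)) (\<lambda>\<omega>. \<lambda>i\<in>I. \<omega> i) = PiM I (\<lambda>_. N)"
    by (subst distr_cong[where g = "\<lambda>\<omega>. \<omega>", OF refl refl]) (auto simp: space_PiM PiE_restrict)
  also have "\<dots> = PiM I (\<lambda>i. distr (PiM I (\<lambda>_. N)) N (\<lambda>\<omega>. \<omega> i))"
    by (intro PiM_cong refl distr_PiM_component[symmetric] N)
  finally show ?thesis
    by (subst indep_vars_iff_distr_eq_PiM'[OF I]) auto
qed

lemma Hoeffding_PiM_mean_ge:
  fixes f :: "'a \<Rightarrow> real" and n :: nat
  assumes S: "prob_space S" and f: "f \<in> borel_measurable S"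
    and f_bounds: "\<And>z. z \<in> space S \<Longrightarrow> f z \<in> {a..b}"
    and "a < b" "0 < n" "0 \<le> \<epsilon>"
  shows "measure (PiM {..<n} (\<lambda>_. S))
           {D \<in> space (PiM {..<n} (\<lambda>_. S)). (\<integral>z. f z \<partial>S) + \<epsilon> \<le> (\<Sum>i<n. f (D i)) / real n}
         \<le> exp (- 2 * real n * \<epsilon>\<^sup>2 / (b - a)\<^sup>2)"
proof -
  let ?M = "PiM {..<n} (\<lambda>_. S)"
  interpret M: prob_space ?M by (intro prob_space_PiM) (use S in auto)
  have component: "distr ?M S (\<lambda>D. D i) = S" if "i < n" for i
    using that S by (intro distr_PiM_component) auto
  have distr_f: "distr ?M borel (\<lambda>D. f (D i)) = distr S borel f" if "i < n" for i
  proof -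
    have "distr ?M borel (\<lambda>D. f (D i)) = distr (distr ?M S (\<lambda>D. D i)) borel f"
      using that f by (subst distr_distr) (auto simp: comp_def)
    then show ?thesis using component[OF that] by simp
  qed
  interpret H: Hoeffding_ineq_iid ?M "{..<n}" "\<lambda>i D. f (D i)" "\<lambda>D. f (D 0)" a b "M.expectation (\<lambda>D. f (D 0))"
  proof unfold_locales
    show "M.indep_vars (\<lambda>_. borel) (\<lambda>i D. f (D i)) {..<n}"
      using M.indep_vars_compose2[where Y = "\<lambda>_. f" and N = "\<lambda>_. borel",
          OF indep_vars_PiM_components[OF _ S]] \<open>0 < n\<close> f
      by auto
    show "AE D in ?M. f (D 0) \<in> {a..b}"
      using f_bounds \<open>0 < n\<close> by (intro AE_I2) (auto simp: space_PiM PiE_iff)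
    show "finite {..<n}" by simp
    show "distr ?M borel (\<lambda>D. f (D i)) = distr ?M borel (\<lambda>D. f (D 0))" if "i \<in> {..<n}" for i
      using distr_f that \<open>0 < n\<close> by simp
    show "(\<lambda>D. f (D 0)) \<in> borel_measurable ?M"
      using measurable_compose[OF measurable_component_singleton[of 0 "{..<n}" "\<lambda>_. S"] f] \<open>0 < n\<close> by simp
  qed
  have "(\<integral>z. f z \<partial>S) = (\<integral>z. f z \<partial>distr ?M S (\<lambda>D. D 0))"
    by (subst component) (use \<open>0 < n\<close> in simp_all)
  also have "\<dots> = M.expectation (\<lambda>D. f (D 0))"
    by (rule integral_distr) (use f \<open>0 < n\<close> in simp_all)
  finally have mean: "M.expectation (\<lambda>D. f (D 0)) = (\<integral>z. f z \<partial>S)" ..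
  show ?thesis
    using H.Hoeffding_ineq_ge'[OF \<open>0 \<le> \<epsilon>\<close> \<open>a < b\<close>] \<open>0 < n\<close>
    unfolding mean card_lessThan by (simp add: lessThan_empty_iff)
qed


lemma integral_bind_bounded:
  fixes f :: "'b \<Rightarrow> real"
  assumes M: "finite_measure M" and K: "K \<in> M \<rightarrow>\<^sub>M subprob_algebra N"
    and f: "f \<in> borel_measurable N" and f_bound: "\<And>z. z \<in> space N \<Longrightarrow> \<bar>f z\<bar> \<le> B"
  shows "(\<integral>z. f z \<partial>(M \<bind> K)) = (\<integral>x. (\<integral>z. f z \<partial>K x) \<partial>M)"
proof (rule integral_bind[OF f f_bound K M])
  show "AE x in M. emeasure (K x) (space (K x)) \<le> ennreal 1"
    using measurable_space[OF K]
    by (intro AE_I2) (simp add: space_subprob_algebra subprob_space.subprob_emeasure_le_1)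
qed

lemma measurable_measure_pmf_kernel:
  "(\<And>r. K r \<in> space (prob_algebra N)) \<Longrightarrow> K \<in> measure_pmf p \<rightarrow>\<^sub>M subprob_algebra N"
  by (auto simp: space_prob_algebra space_subprob_algebra prob_space_imp_subprob_space)

lemma (in prob_space) prob_Ball_ge:
  assumes "finite I"
    and sets_bad: "\<And>i. i \<in> I \<Longrightarrow> {\<omega> \<in> space M. \<not> P i \<omega>} \<in> events"
    and prob_bad: "\<And>i. i \<in> I \<Longrightarrow> prob {\<omega> \<in> space M. \<not> P i \<omega>} \<le> p"
  shows "1 - real (card I) * p \<le> prob {\<omega> \<in> space M. \<forall>i\<in>I. P i \<omega>}"
proof -
  let ?bad = "\<lambda>i. {\<omega> \<in> space M. \<not> P i \<omega>}"
  have "prob (\<Union>i\<in>I. ?bad i) \<le> (\<Sum>i\<in>I. prob (?bad i))"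
    using assms by (intro finite_measure_subadditive_finite) auto
  also have "\<dots> \<le> real (card I) * p"
    using sum_bounded_above[of I "\<lambda>i. prob (?bad i)" p] prob_bad by simp
  finally have "1 - real (card I) * p \<le> prob (space M - (\<Union>i\<in>I. ?bad i))"
    using assms by (subst prob_compl) auto
  also have "space M - (\<Union>i\<in>I. ?bad i) = {\<omega> \<in> space M. \<forall>i\<in>I. P i \<omega>}"
    by auto
  finally show ?thesis .
qed

lemma confidence_budget:
  fixes m :: nat and \<delta> \<iota> :: real
  assumes "0 < \<delta>" "\<delta> \<le> 1" "ln (2 * real m / \<delta>) \<le> \<iota>"
  shows "0 \<le> \<iota>" and "real m * exp (- \<iota>) \<le> \<delta> / 2"
proof -
  have "0 \<le> \<iota> \<and> real m * exp (- \<iota>) \<le> \<delta> / 2"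
  proof (cases "m = 0")
    case True
    then show ?thesis using assms by simp
  next
    case False
    then have ratio: "2 \<le> 2 * real m / \<delta>"
      using assms by (simp add: field_simps)
    then have "0 \<le> ln (2 * real m / \<delta>)" by simp
    then have "0 \<le> \<iota>" using assms by linarith
    have "exp (- \<iota>) \<le> exp (- ln (2 * real m / \<delta>))"
      using assms by simp
    also have "\<dots> = \<delta> / (2 * real m)"
      using ratio assms by (simp add: exp_minus)
    finally have "real m * exp (- \<iota>) \<le> real m * (\<delta> / (2 * real m))"
      by (rule mult_left_mono) simp
    with \<open>0 \<le> \<iota>\<close> False show ?thesis by simp
  qed
  then show "0 \<le> \<iota>" and "real m * exp (- \<iota>) \<le> \<delta> / 2" by auto
qed

definition gap_term :: "('x \<Rightarrow> 'a::finite \<Rightarrow> real) \<Rightarrow> ('y \<Rightarrow> real) \<Rightarrow> 'x \<times> 'a \<times> 'y \<Rightarrow> real" where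
  "gap_term \<pi> \<psi> z = (case z of (x, a, y) \<Rightarrow> (real CARD('a) * \<pi> x a - 1) * \<psi> y)"

lemma Vhat_minus_Vhat_u:
  "Vhat n D \<pi> \<psi> - Vhat_u n D \<psi> = (\<Sum>i<n. gap_term \<pi> \<psi> (D i)) / real n"
  unfolding Vhat_def Vhat_u_def gap_term_def
  by (simp add: sum_subtractf[symmetric] diff_divide_distrib[symmetric] algebra_simps split: prod.splits)

lemma gap_term_bounds:
  fixes \<pi> :: "'x \<Rightarrow> 'a::finite \<Rightarrow> real"
  assumes \<pi>_nonneg: "\<And>x a. 0 \<le> \<pi> x a" and \<pi>_sum: "\<And>x. (\<Sum>a\<in>UNIV. \<pi> x a) = 1"
    and \<psi>_range: "\<And>y. 0 \<le> \<psi> y \<and> \<psi> y \<le> 1"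
  shows "gap_term \<pi> \<psi> z \<in> {-1 .. real CARD('a) - 1}"
proof -
  obtain x a y where z: "z = (x, a, y)" by (cases z)
  define t where "t = real CARD('a) * \<pi> x a - 1"
  have "\<pi> x a \<le> (\<Sum>b\<in>UNIV. \<pi> x b)"
    using \<pi>_nonneg by (intro member_le_sum) auto
  then have t: "-1 \<le> t" "t \<le> real CARD('a) - 1"
    using \<pi>_nonneg[of x a] \<pi>_sum[of x] by (simp_all add: t_def mult_left_le)
  have "-1 \<le> - \<psi> y" "- \<psi> y \<le> t * \<psi> y"
    using \<psi>_range[of y] t by (simp_all add: mult_right_mono[of "-1" t, simplified])
  moreover have "t * \<psi> y \<le> (real CARD('a) - 1) * \<psi> y" "(real CARD('a) - 1) * \<psi> y \<le> real CARD('a) - 1"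
    using \<psi>_range[of y] t by (simp_all add: mult_right_mono mult_left_le)
  moreover have "gap_term \<pi> \<psi> z = t * \<psi> y"
    unfolding z gap_term_def t_def by simp
  ultimately show ?thesis by simp
qed

lemma measurable_gap_term:
  fixes \<pi> :: "'x \<Rightarrow> 'a::finite \<Rightarrow> real"
  assumes \<pi>_measurable: "\<And>a. (\<lambda>x. \<pi> x a) \<in> borel_measurable M"
    and \<psi>_measurable: "\<psi> \<in> borel_measurable N"
  shows "gap_term \<pi> \<psi> \<in> borel_measurable (M \<Otimes>\<^sub>M count_space UNIV \<Otimes>\<^sub>M N)"
proof -
  have "(\<lambda>z. \<pi> (fst z) (fst (snd z))) \<in> borel_measurable (M \<Otimes>\<^sub>M count_space UNIV \<Otimes>\<^sub>M N)"
    by (rule measurable_compose_countable'[where I = UNIV]) (use \<pi>_measurable in auto)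
  then show ?thesis
    using \<psi>_measurable unfolding gap_term_def case_prod_beta by measurable
qed

locale igl_model =
  fixes d0 :: "'x measure" and Q0 Q1 :: "'y measure" and R :: "'x \<Rightarrow> 'a::finite \<Rightarrow> real"
  assumes d0: "prob_space d0" and Q0: "prob_space Q0" and Q1: "prob_space Q1"
    and sets_Q1: "sets Q1 = sets Q0"
    and R_measurable: "\<And>a. (\<lambda>x. R x a) \<in> borel_measurable d0"
    and R_range: "\<And>x a. 0 \<le> R x a \<and> R x a \<le> 1"
begin

abbreviation sample_space :: "('x \<times> 'a \<times> 'y) measure" where
  "sample_space \<equiv> d0 \<Otimes>\<^sub>M count_space UNIV \<Otimes>\<^sub>M Q0"

definition feedback :: "bool \<Rightarrow> 'y measure" where
  "feedback r = (if r then Q1 else Q0)"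

definition sample_given_reward :: "'x \<Rightarrow> 'a \<Rightarrow> bool \<Rightarrow> ('x \<times> 'a \<times> 'y) measure" where
  "sample_given_reward x a r = distr (feedback r) sample_space (\<lambda>y. (x, a, y))"

definition sample_given_action :: "'x \<Rightarrow> 'a \<Rightarrow> ('x \<times> 'a \<times> 'y) measure" where
  "sample_given_action x a = measure_pmf (bernoulli_pmf (R x a)) \<bind> sample_given_reward x a"

definition sample_given_context :: "'x \<Rightarrow> ('x \<times> 'a \<times> 'y) measure" where
  "sample_given_context x = measure_pmf (pmf_of_set UNIV) \<bind> sample_given_action x"

lemma sample_dist_eq_bind: "sample_dist d0 R Q0 Q1 = d0 \<bind> sample_given_context"
  unfolding sample_dist_def sample_given_context_def sample_given_action_def
    sample_given_reward_def feedback_def ..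

lemma prob_space_feedback: "prob_space (feedback r)"
  using Q0 Q1 by (simp add: feedback_def)

lemma sets_feedback: "sets (feedback r) = sets Q0"
  using sets_Q1 by (simp add: feedback_def)

lemma sample_given_reward_in_prob_algebra:
  assumes "x \<in> space d0"
  shows "sample_given_reward x a r \<in> space (prob_algebra sample_space)"
proof -
  have "(\<lambda>y. (x, a, y)) \<in> feedback r \<rightarrow>\<^sub>M sample_space"
    using assms by (auto simp: measurable_cong_sets[OF sets_feedback refl])
  then show ?thesis
    unfolding sample_given_reward_def space_prob_algebra
    by (auto intro: prob_space.prob_space_distr[OF prob_space_feedback])
qed

lemma sample_given_action_in_prob_algebra:
  assumes "x \<in> space d0"
  shows "sample_given_action x a \<in> space (prob_algebra sample_space)"
proof -
  have "measure_pmf (bernoulli_pmf (R x a)) \<in> space (prob_algebra (count_space UNIV))"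
    by (simp add: space_prob_algebra measure_pmf.prob_space_axioms)
  moreover have "sample_given_reward x a \<in> count_space UNIV \<rightarrow>\<^sub>M prob_algebra sample_space"
    using sample_given_reward_in_prob_algebra[OF assms] by simp
  ultimately show ?thesis
    unfolding sample_given_action_def space_prob_algebra[of sample_space]
    using prob_space_bind' sets_bind' by blast
qed

lemma sample_given_context_in_prob_algebra:
  assumes "x \<in> space d0"
  shows "sample_given_context x \<in> space (prob_algebra sample_space)"
proof -
  have "measure_pmf (pmf_of_set UNIV) \<in> space (prob_algebra (count_space (UNIV :: 'a set)))"
    by (simp add: space_prob_algebra measure_pmf.prob_space_axioms)
  moreover have "sample_given_action x \<in> count_space UNIV \<rightarrow>\<^sub>M prob_algebra sample_space"
    using sample_given_action_in_prob_algebra[OF assms] by simp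
  ultimately show ?thesis
    unfolding sample_given_context_def space_prob_algebra[of sample_space]
    using prob_space_bind' sets_bind' by blast
qed

lemma integral_sample_given_reward:
  fixes f :: "'x \<times> 'a \<times> 'y \<Rightarrow> real"
  assumes "x \<in> space d0" and f: "f \<in> borel_measurable sample_space"
  shows "(\<integral>z. f z \<partial>sample_given_reward x a r) = (\<integral>y. f (x, a, y) \<partial>feedback r)"
  unfolding sample_given_reward_def
  using assms by (subst integral_distr) (auto simp: measurable_cong_sets[OF sets_feedback refl])

lemma integral_sample_given_action:
  assumes x: "x \<in> space d0" and f: "f \<in> borel_measurable sample_space"
    and f_bound: "\<And>z. \<bar>f z\<bar> \<le> B"
  shows "(\<integral>z. f z \<partial>sample_given_action x a)
           = R x a * (\<integral>y. f (x, a, y) \<partial>Q1) + (1 - R x a) * (\<integral>y. f (x, a, y) \<partial>Q0)"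
proof -
  have "(\<integral>z. f z \<partial>sample_given_action x a)
          = (\<integral>r. (\<integral>z. f z \<partial>sample_given_reward x a r) \<partial>bernoulli_pmf (R x a))"
    unfolding sample_given_action_def
    by (intro integral_bind_bounded[OF _ _ f f_bound] measurable_measure_pmf_kernel
        sample_given_reward_in_prob_algebra x) (simp add: measure_pmf.finite_measure_axioms)
  then show ?thesis
    using R_range[of x a] by (simp add: integral_sample_given_reward[OF x f] feedback_def)
qed

definition context_mean :: "('x \<times> 'a \<times> 'y \<Rightarrow> real) \<Rightarrow> 'x \<Rightarrow> real" where
  "context_mean f x = (\<Sum>a\<in>UNIV. R x a * (\<integral>y. f (x, a, y) \<partial>Q1)
                                  + (1 - R x a) * (\<integral>y. f (x, a, y) \<partial>Q0)) / real CARD('a)"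

lemma integral_sample_given_context:
  assumes x: "x \<in> space d0" and f: "f \<in> borel_measurable sample_space"
    and f_bound: "\<And>z. \<bar>f z\<bar> \<le> B"
  shows "(\<integral>z. f z \<partial>sample_given_context x) = context_mean f x"
proof -
  have "(\<integral>z. f z \<partial>sample_given_context x)
          = (\<integral>a. (\<integral>z. f z \<partial>sample_given_action x a) \<partial>pmf_of_set UNIV)"
    unfolding sample_given_context_def
    by (intro integral_bind_bounded[OF _ _ f f_bound] measurable_measure_pmf_kernel
        sample_given_action_in_prob_algebra x) (simp add: measure_pmf.finite_measure_axioms)
  then show ?thesis
    by (simp add: integral_pmf_of_set context_mean_def integral_sample_given_action[OF x f f_bound])
qed

lemma measurable_section_integral:
  fixes f :: "'x \<times> 'a \<times> 'y \<Rightarrow> real"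
  assumes f: "f \<in> borel_measurable sample_space"
  shows "(\<lambda>x. \<integral>y. f (x, a, y) \<partial>feedback r) \<in> borel_measurable d0"
proof -
  have "(\<lambda>(x, y). f (x, a, y)) \<in> borel_measurable (d0 \<Otimes>\<^sub>M Q0)"
    using f by measurable
  then have "(\<lambda>(x, y). f (x, a, y)) \<in> borel_measurable (d0 \<Otimes>\<^sub>M feedback r)"
    by (simp add: measurable_cong_sets[OF sets_pair_measure_cong[OF refl sets_feedback] refl])
  then show ?thesis
    by (rule sigma_finite_measure.borel_measurable_lebesgue_integral
        [OF prob_space_imp_sigma_finite[OF prob_space_feedback]])
qed

lemma measurable_context_mean:
  assumes f: "f \<in> borel_measurable sample_space"
  shows "context_mean f \<in> borel_measurable d0"
  using measurable_section_integral[OF f, where r = True] measurable_section_integral[OF f, where r = False]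
    R_measurable
  unfolding context_mean_def feedback_def by simp

lemma measurable_sample_given_context: "sample_given_context \<in> d0 \<rightarrow>\<^sub>M prob_algebra sample_space"
proof (intro measurable_prob_algebraI measurable_subprob_algebra)
  fix x assume x: "x \<in> space d0"
  then show "prob_space (sample_given_context x)" "subprob_space (sample_given_context x)"
    and "sets (sample_given_context x) = sets sample_space"
    using sample_given_context_in_prob_algebra[OF x]
    by (auto simp: space_prob_algebra prob_space_imp_subprob_space)
next
  fix A assume A: "A \<in> sets sample_space"
  have "emeasure (sample_given_context x) A = ennreal (context_mean (indicator A) x)"
    if x: "x \<in> space d0" for x
  proof -
    have sets: "sets (sample_given_context x) = sets sample_space"
      and "prob_space (sample_given_context x)"
      using sample_given_context_in_prob_algebra[OF x] by (simp_all add: space_prob_algebra)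
    interpret prob_space "sample_given_context x" by fact
    have "A \<inter> space (sample_given_context x) = A"
      using A sets.sets_into_space sets_eq_imp_space_eq[OF sets] by auto
    then have "emeasure (sample_given_context x) A = ennreal (\<integral>z. indicator A z \<partial>sample_given_context x)"
      by (simp add: emeasure_eq_measure)
    also have "\<dots> = ennreal (context_mean (indicator A) x)"
      using A by (subst integral_sample_given_context[OF x, where B = 1]) auto
    finally show ?thesis .
  qed
  then show "(\<lambda>x. emeasure (sample_given_context x) A) \<in> borel_measurable d0"
    using measurable_context_mean[of "indicator A"] A
    by (subst measurable_cong[where g = "\<lambda>x. ennreal (context_mean (indicator A) x)"]) auto
qed

lemma prob_space_sample_dist: "prob_space (sample_dist d0 R Q0 Q1)"
  unfolding sample_dist_eq_bind
  by (rule prob_space_bind'[OF _ measurable_sample_given_context]) (simp add: space_prob_algebra d0)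

lemma sets_sample_dist: "sets (sample_dist d0 R Q0 Q1) = sets sample_space"
  unfolding sample_dist_eq_bind
  by (rule sets_bind'[OF _ measurable_sample_given_context]) (simp add: space_prob_algebra d0)

lemma prob_space_data_dist: "prob_space (data_dist n d0 R Q0 Q1)"
  unfolding data_dist_def by (rule prob_space_PiM) (rule prob_space_sample_dist)

lemma integral_sample_dist:
  assumes f: "f \<in> borel_measurable sample_space" and f_bound: "\<And>z. \<bar>f z\<bar> \<le> B"
  shows "(\<integral>z. f z \<partial>sample_dist d0 R Q0 Q1) = (\<integral>x. context_mean f x \<partial>d0)"
  unfolding sample_dist_eq_bind
  using integral_bind_bounded[OF prob_space.finite_measure[OF d0]
      measurable_prob_algebraD[OF measurable_sample_given_context] f f_bound]
  by (simp add: integral_sample_given_context[OF _ f f_bound] cong: Bochner_Integration.integral_cong)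

lemma integrable_policy_reward:
  assumes \<pi>_measurable: "\<And>a. (\<lambda>x. \<pi> x a) \<in> borel_measurable d0"
    and \<pi>_nonneg: "\<And>x a. 0 \<le> \<pi> x a" and \<pi>_sum: "\<And>x. (\<Sum>a\<in>UNIV. \<pi> x a) = 1"
  shows "integrable d0 (\<lambda>x. \<Sum>a\<in>UNIV. \<pi> x a * R x a)"
proof (rule finite_measure.integrable_const_bound[OF prob_space.finite_measure[OF d0], where B = 1])
  show "AE x in d0. norm (\<Sum>a\<in>UNIV. \<pi> x a * R x a) \<le> 1"
  proof (rule AE_I2)
    fix x
    have "(\<Sum>a\<in>UNIV. \<pi> x a * R x a) \<le> (\<Sum>a\<in>UNIV. \<pi> x a)"
      using \<pi>_nonneg R_range by (intro sum_mono mult_left_le) auto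
    moreover have "0 \<le> (\<Sum>a\<in>UNIV. \<pi> x a * R x a)"
      using \<pi>_nonneg R_range by (intro sum_nonneg) auto
    ultimately show "norm (\<Sum>a\<in>UNIV. \<pi> x a * R x a) \<le> 1"
      using \<pi>_sum[of x] by simp
  qed
qed (use \<pi>_measurable R_measurable in measurable)

lemma Vpol_nonneg:
  assumes "\<And>x a. 0 \<le> \<pi> x a"
  shows "0 \<le> Vpol d0 R \<pi>"
  unfolding Vpol_def using assms R_range
  by (intro integral_nonneg_AE AE_I2 sum_nonneg mult_nonneg_nonneg) auto

definition gap_bound_holds ::
  "nat \<Rightarrow> real \<Rightarrow> ('x \<Rightarrow> 'a \<Rightarrow> real) \<Rightarrow> ('y \<Rightarrow> real) \<Rightarrow> (nat \<Rightarrow> 'x \<times> 'a \<times> 'y) \<Rightarrow> bool" where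
  "gap_bound_holds n \<iota> \<pi> \<psi> D \<longleftrightarrow>
     (Vpol d0 R \<pi> \<le> Vpol d0 R unif_pol \<longrightarrow>
      Vhat n D \<pi> \<psi> - Vhat_u n D \<psi> \<le> Vpol d0 R unif_pol + real CARD('a) * sqrt (\<iota> / (2 * real n)))"

lemma context_mean_gap_term:
  assumes \<pi>_sum: "(\<Sum>a\<in>UNIV. \<pi> x a) = 1"
  shows "context_mean (gap_term \<pi> \<psi>) x
           = ((\<integral>y. \<psi> y \<partial>Q1) - (\<integral>y. \<psi> y \<partial>Q0))
             * ((\<Sum>a\<in>UNIV. \<pi> x a * R x a) - (\<Sum>a\<in>UNIV. unif_pol x a * R x a))"
proof -
  define q1 q0 where "q1 = (\<integral>y. \<psi> y \<partial>Q1)" and "q0 = (\<integral>y. \<psi> y \<partial>Q0)"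
  define K where "K = real CARD('a)"
  have K: "K \<noteq> 0" by (simp add: K_def)
  have inner_integral: "(\<integral>y. gap_term \<pi> \<psi> (x, a, y) \<partial>Q) = (K * \<pi> x a - 1) * (\<integral>y. \<psi> y \<partial>Q)"
    for a and Q :: "'y measure"
    by (simp add: gap_term_def K_def)
  have "context_mean (gap_term \<pi> \<psi>) x
          = (\<Sum>a\<in>UNIV. (q1 - q0) * (K * (\<pi> x a * R x a) - R x a) + q0 * (K * \<pi> x a - 1)) / K"
    unfolding context_mean_def inner_integral q1_def[symmetric] q0_def[symmetric] K_def[symmetric]
    by (intro arg_cong2[where f = "(/)"] sum.cong refl) (simp add: algebra_simps)
  also have "\<dots> = ((q1 - q0) * (\<Sum>a\<in>UNIV. K * (\<pi> x a * R x a) - R x a)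
                    + q0 * (\<Sum>a\<in>UNIV. K * \<pi> x a - 1)) / K"
    by (simp add: sum.distrib sum_distrib_left)
  also have "(\<Sum>a\<in>UNIV. K * \<pi> x a - 1) = 0"
    using \<pi>_sum by (simp add: sum_subtractf sum_distrib_left[symmetric] K_def)
  also have "(\<Sum>a\<in>UNIV. K * (\<pi> x a * R x a) - R x a)
               = K * ((\<Sum>a\<in>UNIV. \<pi> x a * R x a) - (\<Sum>a\<in>UNIV. unif_pol x a * R x a))"
    using K by (simp add: sum_subtractf sum_distrib_left right_diff_distrib unif_pol_def K_def)
  finally show ?thesis using K by (simp add: q1_def q0_def)
qed

context
  fixes \<pi> :: "'x \<Rightarrow> 'a \<Rightarrow> real" and \<psi> :: "'y \<Rightarrow> real"
  assumes \<pi>_measurable: "\<And>a. (\<lambda>x. \<pi> x a) \<in> borel_measurable d0"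
    and \<pi>_nonneg: "\<And>x a. 0 \<le> \<pi> x a" and \<pi>_sum: "\<And>x. (\<Sum>a\<in>UNIV. \<pi> x a) = 1"
    and \<psi>_measurable: "\<psi> \<in> borel_measurable Q0" and \<psi>_range: "\<And>y. 0 \<le> \<psi> y \<and> \<psi> y \<le> 1"
begin

lemma integral_gap_term:
  "(\<integral>z. gap_term \<pi> \<psi> z \<partial>sample_dist d0 R Q0 Q1)
     = ((\<integral>y. \<psi> y \<partial>Q1) - (\<integral>y. \<psi> y \<partial>Q0)) * (Vpol d0 R \<pi> - Vpol d0 R unif_pol)"
proof -
  have bound: "\<bar>gap_term \<pi> \<psi> z\<bar> \<le> real CARD('a)" for z
  proof -
    have "1 \<le> real CARD('a)" by simp
    moreover have "-1 \<le> gap_term \<pi> \<psi> z" "gap_term \<pi> \<psi> z \<le> real CARD('a) - 1"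
      using gap_term_bounds[where \<pi> = \<pi> and \<psi> = \<psi> and z = z, OF \<pi>_nonneg \<pi>_sum \<psi>_range]
      by auto
    ultimately show ?thesis
      unfolding abs_le_iff by linarith
  qed
  have "integrable d0 (\<lambda>x. \<Sum>a\<in>UNIV. \<pi> x a * R x a)"
    by (rule integrable_policy_reward[OF \<pi>_measurable \<pi>_nonneg \<pi>_sum])
  moreover have "integrable d0 (\<lambda>x. \<Sum>a\<in>UNIV. unif_pol x a * R x a)"
    by (rule integrable_policy_reward) (simp_all add: unif_pol_def)
  ultimately show ?thesis
    using integral_sample_dist[OF measurable_gap_term[OF \<pi>_measurable \<psi>_measurable] bound]
    by (simp add: context_mean_gap_term[OF \<pi>_sum] Vpol_def)
qed

lemma integral_gap_term_le:
  assumes "Vpol d0 R \<pi> \<le> Vpol d0 R unif_pol"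
  shows "(\<integral>z. gap_term \<pi> \<psi> z \<partial>sample_dist d0 R Q0 Q1) \<le> Vpol d0 R unif_pol"
proof -
  have "0 \<le> (\<integral>y. \<psi> y \<partial>Q1)"
    using \<psi>_range by (simp add: integral_nonneg_AE)
  moreover have "(\<integral>y. \<psi> y \<partial>Q0) \<le> 1"
    using \<psi>_range \<psi>_measurable
    by (intro prob_space.integral_le_const[OF Q0] AE_I2
        finite_measure.integrable_const_bound[OF prob_space.finite_measure[OF Q0], where B = 1]) auto
  ultimately have "((\<integral>y. \<psi> y \<partial>Q0) - (\<integral>y. \<psi> y \<partial>Q1)) * (Vpol d0 R unif_pol - Vpol d0 R \<pi>)
                     \<le> 1 * (Vpol d0 R unif_pol - Vpol d0 R \<pi>)"
    using assms by (intro mult_right_mono) auto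
  then show ?thesis
    using Vpol_nonneg[where \<pi> = \<pi>, OF \<pi>_nonneg] by (simp add: integral_gap_term algebra_simps)
qed

lemma measurable_gap_term_sample_dist [measurable]:
  "gap_term \<pi> \<psi> \<in> borel_measurable (sample_dist d0 R Q0 Q1)"
  using measurable_gap_term[OF \<pi>_measurable \<psi>_measurable]
  by (simp add: measurable_cong_sets[OF sets_sample_dist refl])

lemma sets_gap_bound_fails:
  "{D \<in> space (data_dist n d0 R Q0 Q1). \<not> gap_bound_holds n \<iota> \<pi> \<psi> D} \<in> sets (data_dist n d0 R Q0 Q1)"
  unfolding gap_bound_holds_def Vhat_minus_Vhat_u data_dist_def by measurable

lemma prob_gap_bound_fails:
  assumes "0 \<le> \<iota>"
  shows "measure (data_dist n d0 R Q0 Q1)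
           {D \<in> space (data_dist n d0 R Q0 Q1). \<not> gap_bound_holds n \<iota> \<pi> \<psi> D} \<le> exp (- \<iota>)"
    (is "measure ?M ?E \<le> _")
proof (cases "0 < n \<and> Vpol d0 R \<pi> \<le> Vpol d0 R unif_pol")
  case False
  \<comment> \<open>for \<open>n = 0\<close> both estimates are \<open>0\<close> (division by zero) while the margin is \<open>V(\<pi>\<^sub>u) \<ge> 0\<close>\<close>
  then have empty: "?E = {}"
    using Vpol_nonneg[where \<pi> = unif_pol]
    by (auto simp: gap_bound_holds_def Vhat_def Vhat_u_def unif_pol_def)
  show ?thesis
    unfolding empty by simp
next
  case True
  let ?S = "sample_dist d0 R Q0 Q1"
  define K s where "K = real CARD('a)" and "s = sqrt (\<iota> / (2 * real n))"
  let ?tail = "{D \<in> space ?M. (\<integral>z. gap_term \<pi> \<psi> z \<partial>?S) + K * s \<le> (\<Sum>i<n. gap_term \<pi> \<psi> (D i)) / real n}"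
  have K: "1 \<le> K" by (simp add: K_def)
  have "?E \<subseteq> ?tail"
    using integral_gap_term_le True
    by (auto simp: gap_bound_holds_def Vhat_minus_Vhat_u K_def s_def)
  moreover have "?tail \<in> sets ?M"
    unfolding data_dist_def by measurable
  ultimately have "measure ?M ?E \<le> measure ?M ?tail"
    by (rule finite_measure.finite_measure_mono[OF prob_space.finite_measure[OF prob_space_data_dist]])
  also have "\<dots> \<le> exp (- 2 * real n * (K * s)\<^sup>2 / ((K - 1) - (- 1))\<^sup>2)"
    unfolding data_dist_def
    by (rule Hoeffding_PiM_mean_ge[OF prob_space_sample_dist measurable_gap_term_sample_dist])
       (use True K assms gap_term_bounds[OF \<pi>_nonneg \<pi>_sum \<psi>_range] in \<open>simp_all add: K_def s_def\<close>)
  also have "- 2 * real n * (K * s)\<^sup>2 / ((K - 1) - (- 1))\<^sup>2 = - \<iota>"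
    using True K assms by (simp add: s_def power_mult_distrib)
  finally show ?thesis .
qed

end

end

theorem lemma1:
  fixes d0 :: "'x measure" and Q0 Q1 :: "'y measure"
    and R :: "'x \<Rightarrow> 'a::finite \<Rightarrow> real"
    and Pi :: "('x \<Rightarrow> 'a \<Rightarrow> real) set" and Psi :: "('y \<Rightarrow> real) set"
    and n :: nat and \<delta> \<iota> :: real
  assumes d0: "prob_space d0"
    and Q0: "prob_space Q0" and Q1: "prob_space Q1" and Qsets: "sets Q1 = sets Q0"
    and R_meas: "\<And>a. (\<lambda>x. R x a) \<in> borel_measurable d0"
    and R_range: "\<And>x a. 0 \<le> R x a \<and> R x a \<le> 1"
    and Pi_fin: "finite Pi" and Psi_fin: "finite Psi"
    and Pi_meas: "\<And>\<pi> a. \<pi> \<in> Pi \<Longrightarrow> (\<lambda>x. \<pi> x a) \<in> borel_measurable d0"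
    and Pi_nonneg: "\<And>\<pi> x a. \<pi> \<in> Pi \<Longrightarrow> 0 \<le> \<pi> x a"
    and Pi_sum: "\<And>\<pi> x. \<pi> \<in> Pi \<Longrightarrow> (\<Sum>a\<in>UNIV. \<pi> x a) = 1"
    and Psi_meas: "\<And>\<psi>. \<psi> \<in> Psi \<Longrightarrow> \<psi> \<in> borel_measurable Q0"
    and Psi_range: "\<And>\<psi> y. \<psi> \<in> Psi \<Longrightarrow> 0 \<le> \<psi> y \<and> \<psi> y \<le> 1"
    and delta: "0 < \<delta>" "\<delta> \<le> 1"
    and iota: "\<iota> \<ge> ln (2 * real (card Pi) * real (card Psi) / \<delta>)"
  shows "measure (data_dist n d0 R Q0 Q1)
           {D \<in> space (data_dist n d0 R Q0 Q1).
              \<forall>\<pi>\<in>Pi. \<forall>\<psi>\<in>Psi.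
                Vpol d0 R \<pi> \<le> Vpol d0 R unif_pol \<longrightarrow>
                Vhat n D \<pi> \<psi> - Vhat_u n D \<psi>
                  \<le> Vpol d0 R unif_pol + real CARD('a) * sqrt (\<iota> / (2 * real n))}
         \<ge> 1 - \<delta>"
proof -
  interpret igl_model d0 Q0 Q1 R
    by (rule igl_model.intro[OF d0 Q0 Q1 Qsets R_meas R_range])
  let ?M = "data_dist n d0 R Q0 Q1"
  interpret M: prob_space ?M
    by (rule prob_space_data_dist)
  have "ln (2 * real (card (Pi \<times> Psi)) / \<delta>) \<le> \<iota>"
    using iota by (simp add: card_cartesian_product mult.assoc)
  note budget = confidence_budget[OF delta this]
  have "1 - real (card (Pi \<times> Psi)) * exp (- \<iota>)
          \<le> M.prob {D \<in> space ?M. \<forall>(\<pi>, \<psi>)\<in>Pi \<times> Psi. gap_bound_holds n \<iota> \<pi> \<psi> D}"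
    using Pi_fin Psi_fin
    by (intro M.prob_Ball_ge)
       (auto intro!: sets_gap_bound_fails prob_gap_bound_fails budget(1)
          Pi_meas Pi_nonneg Pi_sum Psi_meas Psi_range)
  also have "{D \<in> space ?M. \<forall>(\<pi>, \<psi>)\<in>Pi \<times> Psi. gap_bound_holds n \<iota> \<pi> \<psi> D}
               = {D \<in> space ?M. \<forall>\<pi>\<in>Pi. \<forall>\<psi>\<in>Psi. Vpol d0 R \<pi> \<le> Vpol d0 R unif_pol \<longrightarrow>
                    Vhat n D \<pi> \<psi> - Vhat_u n D \<psi>
                      \<le> Vpol d0 R unif_pol + real CARD('a) * sqrt (\<iota> / (2 * real n))}"
    by (auto simp: gap_bound_holds_def)
  finally show ?thesis
    using budget delta by linarith
qed

end
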